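(* Let $\langle E,\rightarrow\rangle$ be a computation and $b$ a regular predicate. For events $e,f$, if $e\rightarrow f$ then $J_b(e)\subseteq J_b(f)$.
   Context: A computation is a directed graph $\langle E, \rightarrow\rangle$ (edge relation $\rightarrow$) whose vertices (events) are partitioned among processes, each process having an initial and a final event; $\top$ is the set of final events. A subset $C\subseteq E$ is a consistent cut if for every edge $(u,v)$, $v\in C$ implies $u\in C$. A predicate is regular if whenever consistent cuts $C_1,C_2$ satisfy it, so do $C_1\cap C_2$ and $C_1\cup C_2$ (the trivial cuts $\emptyset$ and $E$ are treated as satisfying $b$). For an event $e$, $J_b(e)$ is the least consistent cut of $\langle E,\rightarrow\rangle$ that satisfies $b$ and contains $e$; if none exists or $e\in\top$, $J_b(e)=E$. *)

theory Defs
  imports Main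
begin

text \<open>A computation: a finite set of events E with edge relation R \<subseteq> E \<times> E,
  events partitioned among processes P via proc; each process p has an initial
  event init p and a final event fin p. Following the standard convention of the
  slicing framework, initial events precede, and final events follow, every event
  of the computation (w.r.t. the reflexive-transitive closure of the edges).\<close>

definition computation ::
  "'a set \<Rightarrow> 'a rel \<Rightarrow> 'p set \<Rightarrow> ('a \<Rightarrow> 'p) \<Rightarrow> ('p \<Rightarrow> 'a) \<Rightarrow> ('p \<Rightarrow> 'a) \<Rightarrow> bool" where
  "computation E R P proc init fin \<longleftrightarrow>
     finite E \<and> R \<subseteq> E \<times> E \<and> proc ` E \<subseteq> P \<and>
     (\<forall>p\<in>P. init p \<in> E \<and> fin p \<in> E \<and> proc (init p) = p \<and> proc (fin p) = p) \<and>
     (\<forall>p\<in>P. \<forall>e\<in>E. (init p, e) \<in> R\<^sup>* \<and> (e, fin p) \<in> R\<^sup>*)"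

definition final_events :: "'p set \<Rightarrow> ('p \<Rightarrow> 'a) \<Rightarrow> 'a set" where
  "final_events P fin = fin ` P"

definition consistent_cut :: "'a set \<Rightarrow> 'a rel \<Rightarrow> 'a set \<Rightarrow> bool" where
  "consistent_cut E R C \<longleftrightarrow> C \<subseteq> E \<and> (\<forall>(u, v) \<in> R. v \<in> C \<longrightarrow> u \<in> C)"

definition sat :: "'a set \<Rightarrow> ('a set \<Rightarrow> bool) \<Rightarrow> 'a set \<Rightarrow> bool" where
  "sat E b C \<longleftrightarrow> C = {} \<or> C = E \<or> b C"

definition regular :: "'a set \<Rightarrow> 'a rel \<Rightarrow> ('a set \<Rightarrow> bool) \<Rightarrow> bool" where
  "regular E R b \<longleftrightarrow>
     (\<forall>C1 C2. consistent_cut E R C1 \<longrightarrow> consistent_cut E R C2 \<longrightarrow>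
        sat E b C1 \<longrightarrow> sat E b C2 \<longrightarrow> sat E b (C1 \<inter> C2) \<and> sat E b (C1 \<union> C2))"

definition least_cut :: "'a set \<Rightarrow> 'a rel \<Rightarrow> ('a set \<Rightarrow> bool) \<Rightarrow> 'a \<Rightarrow> 'a set \<Rightarrow> bool" where
  "least_cut E R b e C \<longleftrightarrow>
     consistent_cut E R C \<and> sat E b C \<and> e \<in> C \<and>
     (\<forall>C'. consistent_cut E R C' \<longrightarrow> sat E b C' \<longrightarrow> e \<in> C' \<longrightarrow> C \<subseteq> C')"

definition J :: "'a set \<Rightarrow> 'a rel \<Rightarrow> 'p set \<Rightarrow> ('p \<Rightarrow> 'a) \<Rightarrow> ('a set \<Rightarrow> bool) \<Rightarrow> 'a \<Rightarrow> 'a set" where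
  "J E R P fin b e =
     (if e \<in> final_events P fin \<or> \<not> (\<exists>C. least_cut E R b e C) then E
      else (THE C. least_cut E R b e C))"

end

theory Submission
  imports Defs
begin

text \<open>Satisfying consistent cuts are closed under intersection, so the satisfying cut of least
  cardinality containing e is the least one. Hence J e lies below every satisfying consistent cut
  containing e; for a final event e this holds because every event precedes e, so E is the only
  consistent cut containing it. If e \<rightarrow> f, the least cut for f contains e and is such a cut.\<close>

lemma consistent_cut_Int:
  "consistent_cut E R A \<Longrightarrow> consistent_cut E R B \<Longrightarrow> consistent_cut E R (A \<inter> B)"
  unfolding consistent_cut_def by blast

lemma consistent_cut_edge_closed:
  "consistent_cut E R C \<Longrightarrow> (u, v) \<in> R \<Longrightarrow> v \<in> C \<Longrightarrow> u \<in> C"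
  unfolding consistent_cut_def by blast

lemma consistent_cut_rtrancl_closed:
  assumes cut: "consistent_cut E R C" and "(u, v) \<in> R\<^sup>*" and "v \<in> C"
  shows "u \<in> C"
  using assms(2,3)
proof (induction rule: converse_rtrancl_induct)
  case base
  then show ?case .
next
  case (step y z)
  then show ?case
    using consistent_cut_edge_closed[OF cut] by blast
qed

lemma consistent_cut_containing_final_event:
  assumes "computation E R P proc init fin"
    and "consistent_cut E R C" and "x \<in> final_events P fin" and "x \<in> C"
  shows "C = E"
proof -
  obtain p where "p \<in> P" and "x = fin p"
    using assms(3) unfolding final_events_def by blast
  then have "(y, x) \<in> R\<^sup>*" if "y \<in> E" for y
    using assms(1) that unfolding computation_def by blast
  then have "E \<subseteq> C"
    using consistent_cut_rtrancl_closed[OF assms(2) _ assms(4)] by blast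
  then show ?thesis
    using assms(2) unfolding consistent_cut_def by blast
qed

lemma least_cut_le:
  "least_cut E R b e C0 \<Longrightarrow> consistent_cut E R C \<Longrightarrow> sat E b C \<Longrightarrow> e \<in> C \<Longrightarrow> C0 \<subseteq> C"
  unfolding least_cut_def by blast

lemma least_cut_unique: "least_cut E R b e C \<Longrightarrow> least_cut E R b e D \<Longrightarrow> C = D"
  unfolding least_cut_def by blast

lemma least_cut_exists:
  assumes "finite E" and "R \<subseteq> E \<times> E" and reg: "regular E R b" and "e \<in> E"
  shows "\<exists>C. least_cut E R b e C"
proof -
  let ?admissible = "\<lambda>C. consistent_cut E R C \<and> sat E b C \<and> e \<in> C"
  have "?admissible E"
    using assms(2,4) unfolding consistent_cut_def sat_def by blast
  then obtain C where C: "?admissible C" and min: "\<And>C'. ?admissible C' \<Longrightarrow> card C \<le> card C'"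
    using ex_has_least_nat[of ?admissible E card] by blast
  have "finite C"
    using C assms(1) unfolding consistent_cut_def by (meson finite_subset)
  have "least_cut E R b e C"
    unfolding least_cut_def
  proof (intro conjI allI impI)
    fix C' assume C': "consistent_cut E R C'" "sat E b C'" "e \<in> C'"
    have "?admissible (C \<inter> C')"
      using C C' reg consistent_cut_Int unfolding regular_def by blast
    then have "card C \<le> card (C \<inter> C')"
      using min by blast
    then have "C \<inter> C' = C"
      using \<open>finite C\<close> by (meson Int_lower1 card_seteq)
    then show "C \<subseteq> C'" by blast
  qed (use C in auto)
  then show ?thesis by blast
qed

lemma J_eq_least_cut:
  assumes "e \<notin> final_events P fin" and "least_cut E R b e C"
  shows "J E R P fin b e = C"
proof -
  have "(THE C. least_cut E R b e C) = C"
    using assms(2) least_cut_unique[OF _ assms(2)] by (rule the_equality)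
  then show ?thesis
    using assms unfolding J_def by auto
qed

lemma J_subset: "J E R P fin b e \<subseteq> E"
proof (cases "e \<in> final_events P fin \<or> \<not> (\<exists>C. least_cut E R b e C)")
  case True
  then show ?thesis
    unfolding J_def by simp
next
  case False
  then obtain C where C: "least_cut E R b e C" and "e \<notin> final_events P fin"
    by blast
  then have "J E R P fin b e = C"
    by (rule J_eq_least_cut[rotated])
  then show ?thesis
    using C unfolding least_cut_def consistent_cut_def by blast
qed

lemma J_subset_satisfying_cut:
  assumes comp: "computation E R P proc init fin" and reg: "regular E R b"
    and cut: "consistent_cut E R C" and "sat E b C" and "e \<in> C"
  shows "J E R P fin b e \<subseteq> C"
proof (cases "e \<in> final_events P fin")
  case True
  then have "C = E"
    by (rule consistent_cut_containing_final_event[OF comp cut _ \<open>e \<in> C\<close>])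
  then show ?thesis
    using J_subset by simp
next
  case False
  have "finite E" and "R \<subseteq> E \<times> E"
    using comp by (simp_all add: computation_def)
  moreover have "e \<in> E"
    using cut \<open>e \<in> C\<close> unfolding consistent_cut_def by blast
  ultimately obtain Ce where Ce: "least_cut E R b e Ce"
    using least_cut_exists[OF _ _ reg] by blast
  have "J E R P fin b e = Ce"
    by (rule J_eq_least_cut[OF False Ce])
  also have "Ce \<subseteq> C"
    by (rule least_cut_le[OF Ce cut \<open>sat E b C\<close> \<open>e \<in> C\<close>])
  finally show ?thesis .
qed

theorem lemma6:
  assumes "computation E R P proc init fin"
    and "regular E R b"
    and "(e, f) \<in> R"
  shows "J E R P fin b e \<subseteq> J E R P fin b f"
proof (cases "f \<in> final_events P fin \<or> \<not> (\<exists>C. least_cut E R b f C)")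
  case True
  then have "J E R P fin b f = E"
    unfolding J_def by simp
  then show ?thesis
    using J_subset by simp
next
  case False
  then obtain Cf where Cf: "least_cut E R b f Cf" and "f \<notin> final_events P fin"
    by blast
  then have J_f: "J E R P fin b f = Cf"
    by (rule J_eq_least_cut[rotated])
  have cut: "consistent_cut E R Cf" and sat: "sat E b Cf" and "f \<in> Cf"
    using Cf unfolding least_cut_def by blast+
  have "e \<in> Cf"
    using cut assms(3) \<open>f \<in> Cf\<close> by (rule consistent_cut_edge_closed)
  then have "J E R P fin b e \<subseteq> Cf"
    by (rule J_subset_satisfying_cut[OF assms(1,2) cut sat])
  with J_f show ?thesis
    by simp
qed

end
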